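(* (a) For the triangle $C_3$, $Y_{C_3}=p_1^3+2p_3$. (b) For the star graph $S_n$ ($n\ge1$), $$Y_{S_n}=\sum_{\substack{0\le r\le n-1\\ r \text{ even}}}\binom{n-1}{r}p_{r+1}\,p_1^{\,n-r-1},$$ i.e. $Y_{S_n}=\binom{n-1}{0}p_1^n+\binom{n-1}{2}p_3p_1^{n-3}+\cdots+\binom{n-1}{n-1}p_n$ if $n$ is odd and $Y_{S_n}=\binom{n-1}{0}p_1^n+\binom{n-1}{2}p_3p_1^{n-3}+\cdots+\binom{n-1}{n-2}p_{n-1}p_1$ if $n$ is even. Moreover, the set $\{Y_{S_n}: n \text{ odd}\}$ is algebraically independent over $\mathbb{Q}$.
   Context: For a finite simple graph $G=(V,E)$ with $V=\{v_1,\dots,v_n\}$, the chromatic symmetric function is $X_G=\sum_\kappa x_{\kappa(v_1)}\cdots x_{\kappa(v_n)}$, summed over all proper colorings $\kappa:V\to\{1,2,\dots\}$ (maps with $\kappa(v_i)\ne\kappa(v_j)$ whenever $\{v_i,v_j\}\in E$). Let $p_r$ denote power sum symmetric functions and $\omega$ the standard involution on symmetric functions with $\omega(p_r)=(-1)^{r-1}p_r$. The near chromatic symmetric function of $G$ is $Y_G=(X_G+\omega(X_G))/2$. The triangle $C_3$ is the cycle on three vertices; the star graph $S_n$ is the tree on $n$ vertices with one internal vertex adjacent to $n-1$ leaves ($S_1$ is a single vertex, $S_2$ a single edge). *)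

theory Defs
  imports Complex_Main "HOL-Library.Poly_Mapping" "HOL-Library.FuncSet"
begin

text \<open>Symmetric functions (more generally, formal power series in the countably many
variables x_0, x_1, x_2, ...) with rational coefficients, represented by their coefficient
function: a monomial is an exponent vector alpha (finitely supported), and f alpha is
the coefficient of x^alpha.\<close>

type_synonym sf = "(nat \<Rightarrow>\<^sub>0 nat) \<Rightarrow> rat"

definition sf_zero :: sf where "sf_zero = (\<lambda>\<alpha>. 0)"
definition sf_one :: sf where "sf_one = (\<lambda>\<alpha>. if \<alpha> = 0 then 1 else 0)"
definition sf_add :: "sf \<Rightarrow> sf \<Rightarrow> sf" where "sf_add f g = (\<lambda>\<alpha>. f \<alpha> + g \<alpha>)"
definition sf_smult :: "rat \<Rightarrow> sf \<Rightarrow> sf" where "sf_smult c f = (\<lambda>\<alpha>. c * f \<alpha>)"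

text \<open>Product of formal power series (Cauchy product; the index set is finite).\<close>
definition sf_mult :: "sf \<Rightarrow> sf \<Rightarrow> sf" where
  "sf_mult f g = (\<lambda>\<alpha>. \<Sum>(\<beta>, \<gamma>) \<in> {(\<beta>, \<gamma>). \<beta> + \<gamma> = \<alpha>}. f \<beta> * g \<gamma>)"

primrec sf_pow :: "sf \<Rightarrow> nat \<Rightarrow> sf" where
  "sf_pow f 0 = sf_one"
| "sf_pow f (Suc k) = sf_mult f (sf_pow f k)"

definition sf_sum :: "('i \<Rightarrow> sf) \<Rightarrow> 'i set \<Rightarrow> sf" where
  "sf_sum g A = (\<lambda>\<alpha>. \<Sum>i\<in>A. g i \<alpha>)"

definition psum :: "nat \<Rightarrow> sf" where
  "psum r = (\<lambda>\<alpha>. if \<exists>i. \<alpha> = Poly_Mapping.single i r then 1 else 0)"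

text \<open>p_lambda for a partition lambda given as a list of positive parts.\<close>
definition p_part :: "nat list \<Rightarrow> sf" where
  "p_part lam = foldr (\<lambda>r acc. sf_mult (psum r) acc) lam sf_one"

definition sf_lin :: "(rat \<times> nat list) list \<Rightarrow> sf" where
  "sf_lin L = (\<lambda>\<alpha>. \<Sum>(c, lam) \<leftarrow> L. c * p_part lam \<alpha>)"

definition valid_plin :: "(rat \<times> nat list) list \<Rightarrow> bool" where
  "valid_plin L \<longleftrightarrow> (\<forall>(c, lam) \<in> set L. \<forall>r \<in> set lam. 0 < r)"

text \<open>omega(p_lambda) = prod_i (-1)^(lambda_i - 1) p_lambda.\<close>
definition omega_sign :: "nat list \<Rightarrow> rat" where
  "omega_sign lam = prod_list (map (\<lambda>r. (-1) ^ (r - 1)) lam)"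

text \<open>The involution omega on Lambda_Q (= the Q-span of the p_lambda), the linear
(indeed ring) map with omega(p_r) = (-1)^(r-1) p_r.  An element of Lambda_Q is written
as a finite combination of p_lambda and omega is applied termwise.\<close>
definition sf_omega :: "sf \<Rightarrow> sf" where
  "sf_omega f = sf_lin (map (\<lambda>(c, lam). (omega_sign lam * c, lam))
                        (SOME L. valid_plin L \<and> f = sf_lin L))"

text \<open>Colours are natural numbers (variables x_0, x_1, ...).\<close>
definition proper_colouring :: "'a set \<Rightarrow> ('a \<Rightarrow> 'a \<Rightarrow> bool) \<Rightarrow> ('a \<Rightarrow> nat) \<Rightarrow> bool" where
  "proper_colouring V E \<kappa> \<longleftrightarrow> (\<forall>u\<in>V. \<forall>v\<in>V. E u v \<longrightarrow> \<kappa> u \<noteq> \<kappa> v)"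

definition chromatic_sf :: "'a set \<Rightarrow> ('a \<Rightarrow> 'a \<Rightarrow> bool) \<Rightarrow> sf" where
  "chromatic_sf V E = (\<lambda>\<alpha>. of_nat (card {\<kappa> \<in> V \<rightarrow>\<^sub>E (UNIV :: nat set).
        proper_colouring V E \<kappa> \<and> (\<forall>i. card {v \<in> V. \<kappa> v = i} = Poly_Mapping.lookup \<alpha> i)}))"

definition near_chromatic_sf :: "'a set \<Rightarrow> ('a \<Rightarrow> 'a \<Rightarrow> bool) \<Rightarrow> sf" where
  "near_chromatic_sf V E = sf_smult (1/2) (sf_add (chromatic_sf V E) (sf_omega (chromatic_sf V E)))"

definition triangle_V :: "nat set" where "triangle_V = {0, 1, 2}"
definition triangle_E :: "nat \<Rightarrow> nat \<Rightarrow> bool" where "triangle_E u v \<longleftrightarrow> u \<noteq> v"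

definition star_V :: "nat \<Rightarrow> nat set" where "star_V n = {0..<n}"
definition star_E :: "nat \<Rightarrow> nat \<Rightarrow> bool" where
  "star_E u v \<longleftrightarrow> u \<noteq> v \<and> (u = 0 \<or> v = 0)"

definition sf_monomial :: "sf list \<Rightarrow> nat list \<Rightarrow> sf" where
  "sf_monomial ys e = foldr (\<lambda>(y, k) acc. sf_mult (sf_pow y k) acc) (zip ys e) sf_one"

definition alg_indep_Q :: "sf set \<Rightarrow> bool" where
  "alg_indep_Q A \<longleftrightarrow>
     (\<forall>ys M (c :: nat list \<Rightarrow> rat).
        distinct ys \<and> set ys \<subseteq> A \<and> finite M \<and> (\<forall>e\<in>M. length e = length ys) \<and>
        sf_sum (\<lambda>e. sf_smult (c e) (sf_monomial ys e)) M = sf_zero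
        \<longrightarrow> (\<forall>e\<in>M. c e = 0))"

end

theory Submission
  imports Defs "HOL-Library.Multiset_Order"
begin

text \<open>Adding to a graph a vertex adjacent to all others acts on its chromatic symmetric
  function by the linear operator \<open>cone 1\<close>, where \<open>cone j f = \<Sum>_i x_i^j f|_{x_i = 0}\<close>. These
  operators satisfy \<open>cone j 1 = p_j\<close> and \<open>p_k cone j f = cone j (p_k f) + cone (j + k) f\<close>, which
  turns the chromatic symmetric functions of the triangle (three cones over the empty graph)
  and of the star (a cone over an edgeless graph) into explicit power sum expansions, e.g.
  \<open>X(S_n) = \<Sum>_r (-1)^r (n-1 choose r) p_{r+1} p_1^{n-1-r}\<close>. As the products \<open>p_\<lambda>\<close> are
  linearly independent, omega acts on such expansions termwise, and averaging with omega
  removes exactly the terms with an odd number of even parts.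

  For odd \<open>n\<close>, the largest partition in the expansion of \<open>Y(S_n)\<close>, in the multiset order, is
  \<open>(n)\<close>, with coefficient 1. Leading terms multiply, so distinct monomials in the \<open>Y(S_n)\<close>
  with \<open>n\<close> odd have distinct leading terms and are therefore linearly independent.\<close>

section \<open>Formal power series in countably many variables\<close>

abbreviation lookup :: "(nat \<Rightarrow>\<^sub>0 nat) \<Rightarrow> nat \<Rightarrow> nat" where "lookup \<equiv> Poly_Mapping.lookup"
abbreviation keys :: "(nat \<Rightarrow>\<^sub>0 nat) \<Rightarrow> nat set" where "keys \<equiv> Poly_Mapping.keys"
abbreviation single :: "nat \<Rightarrow> nat \<Rightarrow> nat \<Rightarrow>\<^sub>0 nat" where "single \<equiv> Poly_Mapping.single"

definition splittings :: "(nat \<Rightarrow>\<^sub>0 nat) \<Rightarrow> ((nat \<Rightarrow>\<^sub>0 nat) \<times> (nat \<Rightarrow>\<^sub>0 nat)) set" where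
  "splittings \<alpha> = {(\<beta>, \<gamma>). \<beta> + \<gamma> = \<alpha>}"

lemma finite_pointwise_below: "finite {\<beta>::nat \<Rightarrow>\<^sub>0 nat. \<forall>i. lookup \<beta> i \<le> lookup \<alpha> i}"
proof -
  let ?A = "{\<beta>::nat \<Rightarrow>\<^sub>0 nat. \<forall>i. lookup \<beta> i \<le> lookup \<alpha> i}"
  let ?f = "\<lambda>\<beta>::nat \<Rightarrow>\<^sub>0 nat. restrict (lookup \<beta>) (keys \<alpha>)"
  have "?f ` ?A \<subseteq> PiE (keys \<alpha>) (\<lambda>i. {..lookup \<alpha> i})" by auto
  then have "finite (?f ` ?A)" by (rule finite_subset) (auto intro!: finite_PiE)
  moreover have "inj_on ?f ?A"
  proof (rule inj_onI, rule poly_mapping_eqI)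
    fix x y k assume "x \<in> ?A" "y \<in> ?A" "?f x = ?f y"
    then show "lookup x k = lookup y k"
      by (cases "k \<in> keys \<alpha>") (auto simp: in_keys_iff dest: fun_cong[of _ _ k], metis le_zero_eq)
  qed
  ultimately show ?thesis by (rule finite_imageD)
qed

lemma finite_splittings [simp]: "finite (splittings \<alpha>)"
proof -
  have "splittings \<alpha> \<subseteq> (\<lambda>\<beta>. (\<beta>, \<alpha> - \<beta>)) ` {\<beta>. \<forall>i. lookup \<beta> i \<le> lookup \<alpha> i}"
    by (auto simp: splittings_def image_iff lookup_add)
  then show ?thesis using finite_pointwise_below finite_subset by blast
qed

lemma sf_mult_splittings: "sf_mult f g \<alpha> = (\<Sum>(\<beta>, \<gamma>) \<in> splittings \<alpha>. f \<beta> * g \<gamma>)"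
  by (simp add: sf_mult_def splittings_def)

lemma sum_splittings_left_unit:
  "(\<Sum>(\<beta>, \<gamma>) \<in> splittings \<alpha>. (if \<beta> = 0 then c else 0) * g \<gamma>) = (c::rat) * g \<alpha>"
proof -
  have "(\<Sum>(\<beta>, \<gamma>) \<in> splittings \<alpha>. (if \<beta> = 0 then c else 0) * g \<gamma>)
      = (\<Sum>x \<in> {x \<in> splittings \<alpha>. fst x = 0}. c * g (snd x))"
    unfolding sum.inter_filter[OF finite_splittings] by (intro sum.cong) auto
  also have "{x \<in> splittings \<alpha>. fst x = 0} = {(0, \<alpha>)}" by (auto simp: splittings_def)
  finally show ?thesis by simp
qed

lemma sf_mult_commute: "sf_mult f g = sf_mult g f"
proof
  fix \<alpha>
  show "sf_mult f g \<alpha> = sf_mult g f \<alpha>"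
    unfolding sf_mult_splittings
    by (rule sum.reindex_bij_witness[of _ prod.swap prod.swap]) (auto simp: splittings_def add.commute)
qed

lemma sf_mult_assoc: "sf_mult (sf_mult f g) h = sf_mult f (sf_mult g h)"
proof
  fix \<alpha>
  have "sf_mult (sf_mult f g) h \<alpha>
      = (\<Sum>(p, q) \<in> Sigma (splittings \<alpha>) (\<lambda>p. splittings (fst p)). f (fst q) * g (snd q) * h (snd p))"
    by (simp add: sf_mult_splittings case_prod_unfold sum_distrib_right sum.Sigma)
  also have "\<dots> = (\<Sum>(p, q) \<in> Sigma (splittings \<alpha>) (\<lambda>p. splittings (snd p)). f (fst p) * (g (fst q) * h (snd q)))"
    by (rule sum.reindex_bij_witness[of _ "\<lambda>((\<beta>, \<gamma>), (\<delta>, \<epsilon>)). ((\<beta> + \<delta>, \<epsilon>), (\<beta>, \<delta>))"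
          "\<lambda>((\<gamma>, \<epsilon>), (\<beta>, \<delta>)). ((\<beta>, \<delta> + \<epsilon>), (\<delta>, \<epsilon>))"])
       (auto simp: splittings_def add.assoc mult.assoc)
  also have "\<dots> = sf_mult f (sf_mult g h) \<alpha>"
    by (simp add: sf_mult_splittings case_prod_unfold sum_distrib_left sum.Sigma)
  finally show "sf_mult (sf_mult f g) h \<alpha> = sf_mult f (sf_mult g h) \<alpha>" .
qed

typedef mps = "UNIV :: sf set" by simp

setup_lifting type_definition_mps

instantiation mps :: comm_ring_1
begin
lift_definition zero_mps :: mps is sf_zero .
lift_definition one_mps :: mps is sf_one .
lift_definition plus_mps :: "mps \<Rightarrow> mps \<Rightarrow> mps" is sf_add .
lift_definition minus_mps :: "mps \<Rightarrow> mps \<Rightarrow> mps" is "\<lambda>f g \<alpha>. f \<alpha> - g \<alpha>" .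
lift_definition uminus_mps :: "mps \<Rightarrow> mps" is "\<lambda>f \<alpha>. - f \<alpha>" .
lift_definition times_mps :: "mps \<Rightarrow> mps \<Rightarrow> mps" is sf_mult .
instance
proof
  fix a b c :: mps
  show "a * b * c = a * (b * c)" by transfer (rule sf_mult_assoc)
  show "a * b = b * a" by transfer (rule sf_mult_commute)
  show "1 * a = a"
    by transfer (simp add: fun_eq_iff sf_mult_splittings sf_one_def sum_splittings_left_unit)
  show "(a + b) * c = a * c + b * c"
    by transfer (simp add: fun_eq_iff sf_add_def sf_mult_splittings case_prod_unfold distrib_right sum.distrib)
qed (transfer; simp add: sf_zero_def sf_one_def sf_add_def fun_eq_iff algebra_simps; fail)+
end

abbreviation mcoeff :: "mps \<Rightarrow> sf" where "mcoeff \<equiv> Rep_mps"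

definition mconst :: "rat \<Rightarrow> mps" where "mconst c = Abs_mps (\<lambda>\<alpha>. if \<alpha> = 0 then c else 0)"

definition mpsum :: "nat \<Rightarrow> mps" where "mpsum r = Abs_mps (psum r)"

lemma mps_eqI: "(\<And>\<alpha>. mcoeff f \<alpha> = mcoeff g \<alpha>) \<Longrightarrow> f = g"
  by (metis Rep_mps_inject ext)

lemma Abs_mps_eq_iff: "Abs_mps f = Abs_mps g \<longleftrightarrow> f = g"
  by (simp add: Abs_mps_inject)

lemma mcoeff_Abs_mps [simp]: "mcoeff (Abs_mps f) = f"
  by (simp add: Abs_mps_inverse)

lemma mcoeff_add [simp]: "mcoeff (f + g) \<alpha> = mcoeff f \<alpha> + mcoeff g \<alpha>"
  by transfer (simp add: sf_add_def)

lemma mcoeff_diff [simp]: "mcoeff (f - g) \<alpha> = mcoeff f \<alpha> - mcoeff g \<alpha>"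
  by transfer simp

lemma mcoeff_uminus [simp]: "mcoeff (- f) \<alpha> = - mcoeff f \<alpha>"
  by transfer simp

lemma mcoeff_zero [simp]: "mcoeff 0 \<alpha> = 0"
  by transfer (simp add: sf_zero_def)

lemma mcoeff_one: "mcoeff 1 \<alpha> = (if \<alpha> = 0 then 1 else 0)"
  by transfer (simp add: sf_one_def)

lemma mcoeff_mult: "mcoeff (f * g) \<alpha> = (\<Sum>(\<beta>, \<gamma>) \<in> splittings \<alpha>. mcoeff f \<beta> * mcoeff g \<gamma>)"
  by transfer (rule sf_mult_splittings)

lemma mcoeff_sum: "mcoeff (\<Sum>i\<in>A. f i) \<alpha> = (\<Sum>i\<in>A. mcoeff (f i) \<alpha>)"
  by (induction A rule: infinite_finite_induct) auto

lemma mcoeff_mconst_mult [simp]: "mcoeff (mconst c * f) \<alpha> = c * mcoeff f \<alpha>"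
  by (simp add: mcoeff_mult mconst_def sum_splittings_left_unit)

lemma mconst_add: "mconst (a + b) = mconst a + mconst b"
  by (rule mps_eqI) (simp add: mconst_def)

lemma mconst_mult: "mconst (a * b) = mconst a * mconst b"
  by (rule mps_eqI) (subst mcoeff_mconst_mult, simp add: mconst_def)

lemma mconst_one: "mconst 1 = 1"
  by (rule mps_eqI) (simp add: mconst_def mcoeff_one)

lemma mconst_zero: "mconst 0 = 0"
  by (rule mps_eqI) (simp add: mconst_def)

lemma mconst_uminus: "mconst (- a) = - mconst a"
  by (rule mps_eqI) (simp add: mconst_def)

lemma mconst_diff: "mconst (a - b) = mconst a - mconst b"
  by (rule mps_eqI) (simp add: mconst_def)

lemma mconst_of_nat: "mconst (of_nat n) = of_nat n"
  by (induction n) (simp_all add: mconst_zero mconst_one mconst_add)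

lemma mconst_power: "mconst (a ^ n) = mconst a ^ n"
  by (induction n) (simp_all add: mconst_one mconst_mult)

lemma Abs_mps_sf_add: "Abs_mps (sf_add f g) = Abs_mps f + Abs_mps g"
  by (simp add: plus_mps.abs_eq)

lemma Abs_mps_sf_mult: "Abs_mps (sf_mult f g) = Abs_mps f * Abs_mps g"
  by (simp add: times_mps.abs_eq)

lemma Abs_mps_sf_pow: "Abs_mps (sf_pow f k) = Abs_mps f ^ k"
  by (induction k) (simp_all add: one_mps.abs_eq Abs_mps_sf_mult)

lemma Abs_mps_sf_smult: "Abs_mps (sf_smult c f) = mconst c * Abs_mps f"
  by (rule mps_eqI) (simp add: sf_smult_def)

lemma Abs_mps_sf_sum: "Abs_mps (sf_sum g A) = (\<Sum>i\<in>A. Abs_mps (g i))"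
  by (rule mps_eqI) (simp add: sf_sum_def mcoeff_sum)

lemma Abs_mps_p_part: "Abs_mps (p_part lam) = (\<Prod>r\<leftarrow>lam. mpsum r)"
  by (induction lam) (simp_all add: p_part_def one_mps.abs_eq Abs_mps_sf_mult mpsum_def)

lemma Abs_mps_sf_monomial:
  "Abs_mps (sf_monomial ys e) = (\<Prod>(y, k)\<leftarrow>zip ys e. Abs_mps y ^ k)"
proof -
  have "Abs_mps (foldr (\<lambda>(y, k) acc. sf_mult (sf_pow y k) acc) z sf_one)
      = (\<Prod>(y, k)\<leftarrow>z. Abs_mps y ^ k)" for z :: "(sf \<times> nat) list"
    by (induction z) (auto simp: one_mps.abs_eq Abs_mps_sf_mult Abs_mps_sf_pow)
  then show ?thesis by (simp add: sf_monomial_def)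
qed

lemma mcoeff_mpsum_mult:
  assumes "0 < k"
  shows "mcoeff (mpsum k * f) \<alpha>
       = (\<Sum>c\<in>keys \<alpha>. if k \<le> lookup \<alpha> c then mcoeff f (\<alpha> - single c k) else 0)"
proof -
  let ?C = "{c \<in> keys \<alpha>. k \<le> lookup \<alpha> c}"
  let ?split = "\<lambda>c. (single c k, \<alpha> - single c k)"
  have split: "single c k + (\<alpha> - single c k) = \<alpha>" if "k \<le> lookup \<alpha> c" for c
    by (rule poly_mapping_eqI) (use that in \<open>auto simp: lookup_add lookup_minus lookup_single when_def\<close>)
  have "{x \<in> splittings \<alpha>. \<exists>i. fst x = single i k} = ?split ` ?C"
  proof (intro set_eqI iffI)
    fix x assume "x \<in> {x \<in> splittings \<alpha>. \<exists>i. fst x = single i k}"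
    then obtain i \<gamma> where x: "x = (single i k, \<gamma>)" and \<alpha>: "\<alpha> = single i k + \<gamma>"
      by (auto simp: splittings_def)
    then have "k \<le> lookup \<alpha> i" by (simp add: lookup_add)
    with assms \<alpha> show "x \<in> ?split ` ?C" by (auto simp: x in_keys_iff)
  qed (auto simp: splittings_def split)
  moreover have "inj_on ?split ?C"
    using assms by (auto intro!: inj_onI dest: arg_cong[where f = keys])
  ultimately have "(\<Sum>x\<in>{x \<in> splittings \<alpha>. \<exists>i. fst x = single i k}. mcoeff f (snd x))
      = (\<Sum>c\<in>?C. mcoeff f (\<alpha> - single c k))"
    by (simp add: sum.reindex)
  moreover have "mcoeff (mpsum k * f) \<alpha>
      = (\<Sum>x\<in>{x \<in> splittings \<alpha>. \<exists>i. fst x = single i k}. mcoeff f (snd x))"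
    unfolding sum.inter_filter[OF finite_splittings] mcoeff_mult mpsum_def psum_def
    by (intro sum.cong) auto
  ultimately show ?thesis by (simp add: sum.inter_filter)
qed

section \<open>The cone operators\<close>

text \<open>The series \<open>\<Sum>_i x_i^j f|_{x_i = 0}\<close>.\<close>
lift_definition cone :: "nat \<Rightarrow> mps \<Rightarrow> mps" is
  "\<lambda>j f \<alpha>. \<Sum>c\<in>keys \<alpha>. if lookup \<alpha> c = j then f (\<alpha> - single c j) else 0" .

lemma mcoeff_cone:
  "mcoeff (cone j f) \<alpha> = (\<Sum>c\<in>keys \<alpha>. if lookup \<alpha> c = j then mcoeff f (\<alpha> - single c j) else 0)"
  by (simp add: cone.rep_eq)

lemma cone_diff: "cone j (f - g) = cone j f - cone j g"
  by (rule mps_eqI) (simp add: mcoeff_cone sum_subtractf[symmetric] if_distrib cong: if_cong)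

lemma cone_one:
  assumes "0 < j"
  shows "cone j 1 = mpsum j"
proof (rule mps_eqI)
  fix \<alpha>
  have "(\<Sum>c\<in>keys \<alpha>. if lookup \<alpha> c = j then mcoeff 1 (\<alpha> - single c j) else 0)
      = (\<Sum>c\<in>keys \<alpha>. if \<alpha> = single c j then 1 else 0)"
  proof (rule sum.cong)
    fix c assume "c \<in> keys \<alpha>"
    have "(lookup \<alpha> c = j \<and> \<alpha> - single c j = 0) \<longleftrightarrow> \<alpha> = single c j"
      by (auto simp: poly_mapping_eq_iff fun_eq_iff lookup_minus lookup_single when_def
          split: if_splits)
    then show "(if lookup \<alpha> c = j then mcoeff 1 (\<alpha> - single c j) else 0)
        = (if \<alpha> = single c j then 1 else 0)"
      by (auto simp: mcoeff_one)
  qed simp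
  also have "\<dots> = mcoeff (mpsum j) \<alpha>"
    using assms by (auto simp: mpsum_def psum_def sum.delta')
  finally show "mcoeff (cone j 1) \<alpha> = mcoeff (mpsum j) \<alpha>" by (simp add: mcoeff_cone)
qed

lemma sum_keys_diff_extend:
  assumes "\<not> Q 0"
  shows "(\<Sum>c\<in>keys (\<alpha> - \<beta>). if Q (lookup (\<alpha> - \<beta>) c) then g c else 0)
       = (\<Sum>c\<in>keys \<alpha>. if Q (lookup (\<alpha> - \<beta>) c) then g c else 0)"
  using assms by (intro sum.mono_neutral_left) (auto simp: in_keys_iff lookup_minus)

text \<open>Pairs of distinct variables contribute equally to both sides; the pairs with equal
  variables give the correction term \<open>cone (j + k) f\<close>.\<close>
lemma cone_mpsum_mult:
  assumes "0 < j" "0 < k"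
  shows "mpsum k * cone j f = cone j (mpsum k * f) + cone (j + k) f"
proof (rule mps_eqI)
  fix \<alpha>
  define A where "A d c = (if k \<le> lookup \<alpha> d \<and> lookup (\<alpha> - single d k) c = j
      then mcoeff f (\<alpha> - single d k - single c j) else 0)" for d c
  define B where "B c d = (if lookup \<alpha> c = j \<and> k \<le> lookup (\<alpha> - single c j) d
      then mcoeff f (\<alpha> - single c j - single d k) else 0)" for c d
  define D where "D c = (if lookup \<alpha> c = j + k then mcoeff f (\<alpha> - single c (j + k)) else 0)" for c
  have AB: "A d c = B c d + (if c = d then D c else 0)" for c d
  proof (cases "c = d")
    case True
    have "\<alpha> - single c k - single c j = \<alpha> - single c (j + k)"
      by (simp add: diff_diff_add single_add add.commute)
    then show ?thesis
      using True assms by (auto simp: A_def B_def D_def lookup_minus)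
  next
    case False
    have "\<alpha> - single d k - single c j = \<alpha> - single c j - single d k"
      by (simp add: diff_diff_add add.commute)
    with False show ?thesis
      by (auto simp: A_def B_def lookup_minus lookup_single)
  qed
  have "mcoeff (mpsum k * cone j f) \<alpha> = (\<Sum>d\<in>keys \<alpha>. \<Sum>c\<in>keys \<alpha>. A d c)"
    unfolding mcoeff_mpsum_mult[OF assms(2)] mcoeff_cone
  proof (rule sum.cong)
    fix d
    show "(if k \<le> lookup \<alpha> d then \<Sum>c\<in>keys (\<alpha> - single d k). if lookup (\<alpha> - single d k) c = j
            then mcoeff f (\<alpha> - single d k - single c j) else 0 else 0) = (\<Sum>c\<in>keys \<alpha>. A d c)"
      using assms(1) sum_keys_diff_extend[of "\<lambda>x. x = j" \<alpha> "single d k" "\<lambda>c. mcoeff f (\<alpha> - single d k - single c j)"] by (simp add: A_def)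
  qed simp
  also have "\<dots> = (\<Sum>c\<in>keys \<alpha>. \<Sum>d\<in>keys \<alpha>. B c d) + (\<Sum>c\<in>keys \<alpha>. D c)"
    using sum.swap[of "\<lambda>d c. B c d" "keys \<alpha>" "keys \<alpha>"] by (simp add: AB sum.distrib)
  also have "\<dots> = mcoeff (cone j (mpsum k * f) + cone (j + k) f) \<alpha>"
    unfolding mcoeff_add mcoeff_mpsum_mult[OF assms(2)] mcoeff_cone
  proof (intro arg_cong2[where f = "(+)"] sum.cong refl)
    fix c
    show "(\<Sum>d\<in>keys \<alpha>. B c d) = (if lookup \<alpha> c = j then \<Sum>d\<in>keys (\<alpha> - single c j).
            if k \<le> lookup (\<alpha> - single c j) d then mcoeff f (\<alpha> - single c j - single d k) else 0 else 0)"
      using assms(2) sum_keys_diff_extend[of "\<lambda>x. k \<le> x" \<alpha> "single c j" "\<lambda>d. mcoeff f (\<alpha> - single c j - single d k)"] by (simp add: B_def)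
  qed (simp add: D_def)
  finally show "mcoeff (mpsum k * cone j f) \<alpha> = mcoeff (cone j (mpsum k * f) + cone (j + k) f) \<alpha>" .
qed

lemma alternating_binomial_Suc:
  fixes T :: "nat \<Rightarrow> 'a::comm_ring_1"
  shows "(\<Sum>r\<le>Suc N. (-1) ^ r * of_nat (Suc N choose r) * T r)
       = (\<Sum>r\<le>N. (-1) ^ r * of_nat (N choose r) * (T r - T (Suc r)))"
proof -
  have "(\<Sum>r\<le>Suc N. (-1) ^ r * of_nat (Suc N choose r) * T r)
      = T 0 + (\<Sum>r\<le>N. (-1) ^ Suc r * (of_nat (N choose r) + of_nat (N choose Suc r)) * T (Suc r))"
    unfolding sum.atMost_Suc_shift by simp
  also have "\<dots> = T 0 + (\<Sum>r\<le>N. (-1) ^ Suc r * of_nat (N choose Suc r) * T (Suc r))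
          - (\<Sum>r\<le>N. (-1) ^ r * of_nat (N choose r) * T (Suc r))"
    by (simp add: ring_distribs sum_subtractf sum_negf)
  also have "T 0 + (\<Sum>r\<le>N. (-1) ^ Suc r * of_nat (N choose Suc r) * T (Suc r))
      = (\<Sum>r\<le>N. (-1) ^ r * of_nat (N choose r) * T r)"
    using sum.atMost_Suc_shift[of "\<lambda>r. (-1) ^ r * of_nat (N choose r) * T r" N] by (simp add: binomial_eq_0)
  finally show ?thesis by (simp add: algebra_simps sum_subtractf)
qed

lemma cone_mpsum_1_power:
  assumes "0 < j"
  shows "cone j (mpsum 1 ^ N)
       = (\<Sum>r\<le>N. (-1) ^ r * of_nat (N choose r) * (mpsum (j + r) * mpsum 1 ^ (N - r)))"
  using assms
proof (induction N arbitrary: j)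
  case 0
  then show ?case by (simp add: cone_one)
next
  case (Suc N)
  let ?T = "\<lambda>r. mpsum (j + r) * mpsum 1 ^ (Suc N - r)"
  have "cone j (mpsum 1 ^ Suc N) = mpsum 1 * cone j (mpsum 1 ^ N) - cone (j + 1) (mpsum 1 ^ N)"
    using cone_mpsum_mult[OF Suc.prems, of 1 "mpsum 1 ^ N"] by simp
  also have "\<dots> = (\<Sum>r\<le>N. (-1) ^ r * of_nat (N choose r) * (?T r - ?T (Suc r)))"
    using Suc by (simp add: sum_distrib_left sum_subtractf[symmetric] algebra_simps Suc_diff_le)
  also have "\<dots> = (\<Sum>r\<le>Suc N. (-1) ^ r * of_nat (Suc N choose r) * ?T r)"
    by (rule alternating_binomial_Suc[symmetric])
  finally show ?case .
qed

section \<open>Chromatic symmetric functions of cones and edgeless graphs\<close>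

definition colour_content :: "'a set \<Rightarrow> ('a \<Rightarrow> nat) \<Rightarrow> (nat \<Rightarrow>\<^sub>0 nat) \<Rightarrow> bool" where
  "colour_content V \<kappa> \<alpha> \<longleftrightarrow> (\<forall>i. card {v \<in> V. \<kappa> v = i} = lookup \<alpha> i)"

lemma chromatic_sf_colour_content:
  "chromatic_sf V E \<alpha>
     = of_nat (card {\<kappa> \<in> V \<rightarrow>\<^sub>E UNIV. proper_colouring V E \<kappa> \<and> colour_content V \<kappa> \<alpha>})"
  by (simp add: chromatic_sf_def colour_content_def)

lemma card_PiE_insert:
  assumes A: "finite A" "a \<notin> A" and C: "finite C" "\<And>c \<kappa>. \<Phi> c \<kappa> \<Longrightarrow> c \<in> C"
    and fin: "\<And>c. c \<in> C \<Longrightarrow> finite {\<kappa> \<in> A \<rightarrow>\<^sub>E UNIV. \<Phi> c \<kappa>}"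
  shows "card {\<kappa> \<in> insert a A \<rightarrow>\<^sub>E UNIV. \<Phi> (\<kappa> a) (restrict \<kappa> A)}
       = (\<Sum>c\<in>C. card {\<kappa> \<in> A \<rightarrow>\<^sub>E UNIV. \<Phi> c \<kappa>})"
proof -
  let ?L = "{\<kappa> \<in> insert a A \<rightarrow>\<^sub>E UNIV. \<Phi> (\<kappa> a) (restrict \<kappa> A)}"
  let ?R = "SIGMA c:C. {\<kappa> \<in> A \<rightarrow>\<^sub>E UNIV. \<Phi> c \<kappa>}"
  have restrict_upd: "restrict (\<kappa>(a := c)) A = \<kappa>" if "\<kappa> \<in> A \<rightarrow>\<^sub>E UNIV" for \<kappa> :: "'a \<Rightarrow> 'b" and c
    using that A(2) by (auto simp: PiE_def extensional_def fun_eq_iff)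
  have "bij_betw (\<lambda>\<kappa>. (\<kappa> a, restrict \<kappa> A)) ?L ?R"
  proof (rule bij_betwI[where g = "\<lambda>(c, \<kappa>). \<kappa>(a := c)"])
    show "(\<lambda>\<kappa>. (\<kappa> a, restrict \<kappa> A)) \<in> ?L \<rightarrow> ?R" using C(2) by auto
    show "(\<lambda>(c, \<kappa>). \<kappa>(a := c)) \<in> ?R \<rightarrow> ?L"
      using restrict_upd by (auto simp: PiE_def extensional_def)
  qed (auto simp: restrict_upd PiE_def extensional_def fun_eq_iff)
  then have "card ?L = card ?R" by (rule bij_betw_same_card)
  also have "\<dots> = (\<Sum>c\<in>C. card {\<kappa> \<in> A \<rightarrow>\<^sub>E UNIV. \<Phi> c \<kappa>})" using C fin by simp
  finally show ?thesis .
qed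

lemma colour_content_insert:
  assumes "finite A" "a \<notin> A"
  shows "colour_content (insert a A) \<kappa> \<alpha>
     \<longleftrightarrow> \<kappa> a \<in> keys \<alpha> \<and> colour_content A (restrict \<kappa> A) (\<alpha> - single (\<kappa> a) 1)"
proof -
  have "card {v \<in> insert a A. \<kappa> v = i} = card {v \<in> A. restrict \<kappa> A v = i} + (if \<kappa> a = i then 1 else 0)"
    for i
  proof -
    have "{v \<in> insert a A. \<kappa> v = i} = (if \<kappa> a = i then insert a else id) {v \<in> A. restrict \<kappa> A v = i}"
      by auto
    then show ?thesis using assms by simp
  qed
  then show ?thesis
    unfolding colour_content_def
    by (auto simp: lookup_minus lookup_single when_def in_keys_iff)
qed

lemma finite_colour_content:
  assumes "finite A"
  shows "finite {\<kappa> \<in> A \<rightarrow>\<^sub>E UNIV. colour_content A \<kappa> \<beta>}"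
proof (rule finite_subset)
  show "{\<kappa> \<in> A \<rightarrow>\<^sub>E UNIV. colour_content A \<kappa> \<beta>} \<subseteq> A \<rightarrow>\<^sub>E keys \<beta>"
  proof safe
    fix \<kappa> v assume "colour_content A \<kappa> \<beta>" "v \<in> A"
    moreover have "card {w \<in> A. \<kappa> w = \<kappa> v} \<noteq> 0" using \<open>v \<in> A\<close> assms by auto
    ultimately show "\<kappa> v \<in> keys \<beta>" by (auto simp: colour_content_def in_keys_iff)
  qed (auto simp: PiE_def extensional_def)
  show "finite (A \<rightarrow>\<^sub>E keys \<beta>)" using assms by (simp add: finite_PiE)
qed

lemma chromatic_sf_insert:
  assumes A: "finite A" "a \<notin> A" and loop: "\<not> E a a"
  shows "chromatic_sf (insert a A) E \<alpha>
       = (\<Sum>c\<in>keys \<alpha>. of_nat (card {\<kappa> \<in> A \<rightarrow>\<^sub>E UNIV. proper_colouring A E \<kappa>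
            \<and> (\<forall>v\<in>A. E a v \<or> E v a \<longrightarrow> \<kappa> v \<noteq> c) \<and> colour_content A \<kappa> (\<alpha> - single c 1)}))"
proof -
  let ?\<Phi> = "\<lambda>c \<kappa>. c \<in> keys \<alpha> \<and> proper_colouring A E \<kappa> \<and> (\<forall>v\<in>A. E a v \<or> E v a \<longrightarrow> \<kappa> v \<noteq> c)
      \<and> colour_content A \<kappa> (\<alpha> - single c 1)"
  have "proper_colouring (insert a A) E \<kappa> \<longleftrightarrow>
      proper_colouring A E (restrict \<kappa> A) \<and> (\<forall>v\<in>A. E a v \<or> E v a \<longrightarrow> restrict \<kappa> A v \<noteq> \<kappa> a)" for \<kappa>
    using loop unfolding proper_colouring_def by auto
  then have "{\<kappa> \<in> insert a A \<rightarrow>\<^sub>E UNIV. proper_colouring (insert a A) E \<kappa> \<and> colour_content (insert a A) \<kappa> \<alpha>}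
      = {\<kappa> \<in> insert a A \<rightarrow>\<^sub>E UNIV. ?\<Phi> (\<kappa> a) (restrict \<kappa> A)}"
    using colour_content_insert[OF A] by auto
  moreover have "card {\<kappa> \<in> insert a A \<rightarrow>\<^sub>E UNIV. ?\<Phi> (\<kappa> a) (restrict \<kappa> A)}
      = (\<Sum>c\<in>keys \<alpha>. card {\<kappa> \<in> A \<rightarrow>\<^sub>E UNIV. ?\<Phi> c \<kappa>})"
    by (rule card_PiE_insert[OF A finite_keys])
       (auto intro: finite_subset[OF _ finite_colour_content[OF A(1)]])
  ultimately show ?thesis
    unfolding chromatic_sf_colour_content by (simp cong: conj_cong)
qed

lemma chromatic_sf_empty: "Abs_mps (chromatic_sf {} E) = 1"
proof (rule mps_eqI)
  fix \<alpha>
  have "colour_content {} \<kappa> \<alpha> \<longleftrightarrow> \<alpha> = 0" for \<kappa> :: "'a \<Rightarrow> nat"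
    by (auto simp: colour_content_def poly_mapping_eq_iff fun_eq_iff)
  then show "mcoeff (Abs_mps (chromatic_sf {} E)) \<alpha> = mcoeff 1 \<alpha>"
    by (simp add: chromatic_sf_colour_content mcoeff_one proper_colouring_def)
qed

lemma chromatic_sf_insert_isolated:
  assumes "finite A" "a \<notin> A" and isolated: "\<forall>v\<in>insert a A. \<not> E a v \<and> \<not> E v a"
  shows "Abs_mps (chromatic_sf (insert a A) E) = mpsum 1 * Abs_mps (chromatic_sf A E)"
proof (rule mps_eqI)
  fix \<alpha>
  have "\<not> E a a" using isolated by simp
  then show "mcoeff (Abs_mps (chromatic_sf (insert a A) E)) \<alpha> = mcoeff (mpsum 1 * Abs_mps (chromatic_sf A E)) \<alpha>"
    unfolding mcoeff_Abs_mps chromatic_sf_insert[of A a E, OF assms(1,2) \<open>\<not> E a a\<close>]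
      mcoeff_mpsum_mult[OF zero_less_one]
    using isolated by (auto simp: chromatic_sf_colour_content in_keys_iff Suc_le_eq intro!: sum.cong)
qed

lemma colour_content_avoids_iff:
  assumes "finite A" "colour_content A \<kappa> \<beta>"
  shows "(\<forall>v\<in>A. \<kappa> v \<noteq> c) \<longleftrightarrow> lookup \<beta> c = 0"
proof -
  have "card {v \<in> A. \<kappa> v = c} = lookup \<beta> c" using assms(2) by (simp add: colour_content_def)
  moreover have "card {v \<in> A. \<kappa> v = c} = 0 \<longleftrightarrow> (\<forall>v\<in>A. \<kappa> v \<noteq> c)" using assms(1) by auto
  ultimately show ?thesis by simp
qed

lemma chromatic_sf_insert_cone:
  assumes "finite A" "a \<notin> A" "\<not> E a a" and cone: "\<forall>v\<in>A. E a v"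
  shows "Abs_mps (chromatic_sf (insert a A) E) = cone 1 (Abs_mps (chromatic_sf A E))"
proof (rule mps_eqI)
  fix \<alpha>
  have "{\<kappa> \<in> A \<rightarrow>\<^sub>E UNIV. proper_colouring A E \<kappa> \<and> (\<forall>v\<in>A. \<kappa> v \<noteq> c) \<and> colour_content A \<kappa> (\<alpha> - single c 1)}
      = (if lookup \<alpha> c = 1
         then {\<kappa> \<in> A \<rightarrow>\<^sub>E UNIV. proper_colouring A E \<kappa> \<and> colour_content A \<kappa> (\<alpha> - single c 1)} else {})"
    if "c \<in> keys \<alpha>" for c
  proof -
    have "(\<forall>v\<in>A. \<kappa> v \<noteq> c) \<longleftrightarrow> lookup \<alpha> c = 1" if "colour_content A \<kappa> (\<alpha> - single c 1)" for \<kappa>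
      using colour_content_avoids_iff[OF assms(1) that] \<open>c \<in> keys \<alpha>\<close> by (auto simp: lookup_minus in_keys_iff)
    then show ?thesis by auto
  qed
  then show "mcoeff (Abs_mps (chromatic_sf (insert a A) E)) \<alpha> = mcoeff (cone 1 (Abs_mps (chromatic_sf A E))) \<alpha>"
    unfolding mcoeff_Abs_mps chromatic_sf_insert[of A a E, OF assms(1-3)] mcoeff_cone
    using cone by (auto simp: chromatic_sf_colour_content intro!: sum.cong)
qed

lemma chromatic_sf_edgeless:
  assumes "finite A" "\<forall>u\<in>A. \<forall>v\<in>A. \<not> E u v"
  shows "Abs_mps (chromatic_sf A E) = mpsum 1 ^ card A"
  using assms
proof (induction A rule: finite_induct)
  case empty
  show ?case by (simp add: chromatic_sf_empty)
next
  case (insert a A)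
  then show ?case by (simp add: chromatic_sf_insert_isolated)
qed

section \<open>Linear independence of the power sum products\<close>

definition placed_exponent :: "nat list \<Rightarrow> nat list \<Rightarrow> (nat \<Rightarrow>\<^sub>0 nat)" where
  "placed_exponent cs lam = (\<Sum>j<length lam. single (cs ! j) (lam ! j))"

lemma lookup_placed_exponent:
  "lookup (placed_exponent cs lam) x = (\<Sum>j<length lam. if cs ! j = x then lam ! j else 0)"
  by (simp add: placed_exponent_def lookup_sum lookup_single when_def)

lemma placed_exponent_Cons: "placed_exponent (c # cs) (r # lam) = single c r + placed_exponent cs lam"
  unfolding placed_exponent_def length_Cons sum.lessThan_Suc_shift by simp

lemma mcoeff_prod_mpsum_nonneg: "mcoeff (\<Prod>r\<leftarrow>lam. mpsum r) \<beta> \<ge> 0"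
proof (induction lam arbitrary: \<beta>)
  case (Cons r lam)
  then show ?case
    by (simp add: mcoeff_mult case_prod_unfold mpsum_def psum_def sum_nonneg)
qed (simp add: mcoeff_one)

lemma mcoeff_prod_mpsum_neq_0_iff:
  assumes "\<forall>r\<in>set lam. 0 < r"
  shows "mcoeff (\<Prod>r\<leftarrow>lam. mpsum r) \<alpha> \<noteq> 0
     \<longleftrightarrow> (\<exists>cs. length cs = length lam \<and> \<alpha> = placed_exponent cs lam)"
  using assms
proof (induction lam arbitrary: \<alpha>)
  case Nil
  then show ?case by (simp add: mcoeff_one placed_exponent_def)
next
  case (Cons r lam)
  have r: "0 < r" using Cons.prems by simp
  have "mcoeff (\<Prod>r\<leftarrow>r # lam. mpsum r) \<alpha> \<noteq> 0
      \<longleftrightarrow> (\<exists>c\<in>keys \<alpha>. r \<le> lookup \<alpha> c \<and> mcoeff (\<Prod>r\<leftarrow>lam. mpsum r) (\<alpha> - single c r) \<noteq> 0)"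
    by (simp add: mcoeff_mpsum_mult[OF r] sum_nonneg_eq_0_iff mcoeff_prod_mpsum_nonneg) blast
  also have "\<dots> \<longleftrightarrow> (\<exists>c cs. length cs = length lam \<and> \<alpha> = single c r + placed_exponent cs lam)"
  proof
    assume "\<exists>c\<in>keys \<alpha>. r \<le> lookup \<alpha> c \<and> mcoeff (\<Prod>r\<leftarrow>lam. mpsum r) (\<alpha> - single c r) \<noteq> 0"
    then obtain c cs where c: "r \<le> lookup \<alpha> c"
      and cs: "length cs = length lam" "\<alpha> - single c r = placed_exponent cs lam"
      using Cons by auto
    have "\<alpha> = single c r + (\<alpha> - single c r)"
      by (rule poly_mapping_eqI) (use c in \<open>auto simp: lookup_add lookup_minus lookup_single when_def\<close>)
    with cs show "\<exists>c cs. length cs = length lam \<and> \<alpha> = single c r + placed_exponent cs lam" by auto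
  next
    assume "\<exists>c cs. length cs = length lam \<and> \<alpha> = single c r + placed_exponent cs lam"
    then obtain c cs where cs: "length cs = length lam" "\<alpha> = single c r + placed_exponent cs lam"
      by blast
    then have "r \<le> lookup \<alpha> c" "c \<in> keys \<alpha>" using r by (auto simp: lookup_add in_keys_iff)
    moreover have "mcoeff (\<Prod>r\<leftarrow>lam. mpsum r) (\<alpha> - single c r) \<noteq> 0"
    proof -
      have "\<alpha> - single c r = placed_exponent cs lam" using cs by simp
      then show ?thesis using Cons cs(1) by auto
    qed
    ultimately show "\<exists>c\<in>keys \<alpha>. r \<le> lookup \<alpha> c \<and> mcoeff (\<Prod>r\<leftarrow>lam. mpsum r) (\<alpha> - single c r) \<noteq> 0"
      by blast
  qed
  also have "\<dots> \<longleftrightarrow> (\<exists>cs. length cs = length (r # lam) \<and> \<alpha> = placed_exponent cs (r # lam))"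
    by (metis length_Suc_conv placed_exponent_Cons)
  finally show ?case .
qed

lemma keys_placed_exponent_subset:
  "length cs = length lam \<Longrightarrow> keys (placed_exponent cs lam) \<subseteq> set cs"
  by (auto simp: in_keys_iff lookup_placed_exponent dest!: sum.not_neutral_contains_not_neutral
      split: if_splits)

lemma lookup_placed_exponent_nth:
  assumes "distinct cs" "length cs = length lam" "j < length lam"
  shows "lookup (placed_exponent cs lam) (cs ! j) = lam ! j"
proof -
  have "lookup (placed_exponent cs lam) (cs ! j) = (\<Sum>i<length lam. if i = j then lam ! i else 0)"
    unfolding lookup_placed_exponent using assms by (intro sum.cong) (auto simp: nth_eq_iff_index_eq)
  then show ?thesis using assms(3) by simp
qed

text \<open>Placing the parts of \<open>l0\<close> on pairwise distinct variables gives a monomial that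
  cannot be produced by a partition with at most as many parts, unless it is a rearrangement.\<close>
lemma mset_eq_if_placed_exponent_eq:
  assumes pos: "\<forall>r\<in>set l0. 0 < r"
    and len: "length cs = length lam" "length lam \<le> length l0"
    and eq: "placed_exponent [0..<length l0] l0 = placed_exponent cs lam"
  shows "mset lam = mset l0"
proof -
  let ?L = "length l0"
  have "keys (placed_exponent [0..<?L] l0) = {0..<?L}"
    using pos lookup_placed_exponent_nth[of "[0..<?L]" l0] keys_placed_exponent_subset[of "[0..<?L]" l0]
    by (auto simp: in_keys_iff)
  then have sub: "{0..<?L} \<subseteq> set cs" using keys_placed_exponent_subset[OF len(1)] eq by auto
  then have "?L \<le> card (set cs)" using card_mono[OF finite_set sub] by simp
  then have "card (set cs) = length cs" "card (set cs) = ?L"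
    using card_length[of cs] len by linarith+
  then have dist: "distinct cs" and setcs: "set cs = {0..<?L}"
    using card_distinct card_subset_eq[OF finite_set sub] by auto
  have lam: "lam = map (\<lambda>c. l0 ! c) cs"
  proof (rule nth_equalityI)
    fix j assume j: "j < length lam"
    then have "cs ! j < ?L" using setcs len(1) by (metis atLeastLessThan_iff nth_mem)
    then show "lam ! j = map (\<lambda>c. l0 ! c) cs ! j"
      using lookup_placed_exponent_nth[OF dist len(1) j] lookup_placed_exponent_nth[of "[0..<?L]" l0 "cs ! j"]
        eq j len(1) by simp
  qed (use len in simp)
  have "mset cs = mset [0..<?L]"
    using dist setcs by (metis distinct_upt set_eq_iff_mset_eq_distinct set_upt)
  then have "mset lam = image_mset (\<lambda>c. l0 ! c) (mset [0..<?L])"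
    by (simp only: lam mset_map)
  also have "\<dots> = mset (map (\<lambda>c. l0 ! c) [0..<?L])" by (simp only: mset_map)
  finally show ?thesis by (simp add: map_nth)
qed

definition mpsum_mset :: "nat multiset \<Rightarrow> mps" where
  "mpsum_mset m = (\<Prod>r\<in>#m. mpsum r)"

lemma mpsum_mset_mset: "mpsum_mset (mset lam) = (\<Prod>r\<leftarrow>lam. mpsum r)"
  by (simp add: mpsum_mset_def prod_mset_prod_list[symmetric] mset_map)

lemma mcoeff_mpsum_mset_distinct_placement:
  assumes "0 \<notin># m" "0 \<notin># m0" "size m \<le> size m0"
  shows "mcoeff (mpsum_mset m) (placed_exponent [0..<size m0] (sorted_list_of_multiset m0)) \<noteq> 0
     \<longleftrightarrow> m = m0"
proof -
  define l0 where "l0 = sorted_list_of_multiset m0"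
  define lam where "lam = sorted_list_of_multiset m"
  have l0: "mset l0 = m0" "\<forall>r\<in>set l0. 0 < r" using assms(2) by (auto simp: l0_def intro!: gr0I)
  have lam: "mset lam = m" "\<forall>r\<in>set lam. 0 < r" using assms(1) by (auto simp: lam_def intro!: gr0I)
  have "size m0 = length l0" using l0 by auto
  then have "mcoeff (mpsum_mset m) (placed_exponent [0..<size m0] l0) \<noteq> 0
      \<longleftrightarrow> (\<exists>cs. length cs = length lam \<and> placed_exponent [0..<length l0] l0 = placed_exponent cs lam)"
    unfolding lam(1)[symmetric] mpsum_mset_mset mcoeff_prod_mpsum_neq_0_iff[OF lam(2)] by simp
  also have "\<dots> \<longleftrightarrow> m = m0"
  proof
    assume "\<exists>cs. length cs = length lam \<and> placed_exponent [0..<length l0] l0 = placed_exponent cs lam"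
    moreover have "length lam \<le> length l0" using assms(3) l0(1) lam(1) by auto
    ultimately show "m = m0" using mset_eq_if_placed_exponent_eq[OF l0(2)] l0(1) lam(1) by metis
  next
    assume "m = m0"
    then have "lam = l0" by (simp add: lam_def l0_def)
    then show "\<exists>cs. length cs = length lam \<and> placed_exponent [0..<length l0] l0 = placed_exponent cs lam"
      by (intro exI[of _ "[0..<length l0]"]) simp
  qed
  finally show ?thesis by (simp add: l0_def)
qed

lemma mpsum_mset_linear_independent:
  assumes "finite S" "\<forall>m\<in>S. 0 \<notin># m" and zero: "(\<Sum>m\<in>S. mconst (a m) * mpsum_mset m) = 0"
  shows "\<forall>m\<in>S. a m = 0"
proof (rule ccontr)
  assume "\<not> (\<forall>m\<in>S. a m = 0)"
  then have S': "finite {m \<in> S. a m \<noteq> 0}" "{m \<in> S. a m \<noteq> 0} \<noteq> {}" using assms(1) by auto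
  then obtain m0 where m0: "m0 \<in> S" "a m0 \<noteq> 0" "size m0 = Max (size ` {m \<in> S. a m \<noteq> 0})"
    using Max_in[of "size ` {m \<in> S. a m \<noteq> 0}"] by fastforce
  then have max: "\<forall>m\<in>S. a m \<noteq> 0 \<longrightarrow> size m \<le> size m0" using S'(1) by simp
  define \<alpha> where "\<alpha> = placed_exponent [0..<size m0] (sorted_list_of_multiset m0)"
  have other: "mcoeff (mpsum_mset m) \<alpha> = 0" if "m \<in> S" "a m \<noteq> 0" "m \<noteq> m0" for m
    using that assms(2) m0 max mcoeff_mpsum_mset_distinct_placement[of m m0] by (simp add: \<alpha>_def)
  have "mcoeff (\<Sum>m\<in>S. mconst (a m) * mpsum_mset m) \<alpha> = (\<Sum>m\<in>S. a m * mcoeff (mpsum_mset m) \<alpha>)"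
    by (simp add: mcoeff_sum)
  also have "\<dots> = (\<Sum>m\<in>{m0}. a m * mcoeff (mpsum_mset m) \<alpha>)"
    using assms(1) m0 other by (intro sum.mono_neutral_right) auto
  also have "\<dots> \<noteq> 0"
    using m0 assms(2) mcoeff_mpsum_mset_distinct_placement[of m0 m0] by (simp add: \<alpha>_def)
  finally show False using zero by simp
qed

section \<open>Power sum expansions and the involution omega\<close>

definition plin_eval :: "(rat \<times> nat list) list \<Rightarrow> mps" where
  "plin_eval L = (\<Sum>(c, lam)\<leftarrow>L. mconst c * (\<Prod>r\<leftarrow>lam. mpsum r))"

definition plin_coeff :: "(rat \<times> nat list) list \<Rightarrow> nat multiset \<Rightarrow> rat" where
  "plin_coeff L m = (\<Sum>(c, lam)\<leftarrow>L. if mset lam = m then c else 0)"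

lemma plin_eval_Nil [simp]: "plin_eval [] = 0"
  and plin_eval_Cons [simp]: "plin_eval ((c, lam) # L) = mconst c * (\<Prod>r\<leftarrow>lam. mpsum r) + plin_eval L"
  and plin_eval_append [simp]: "plin_eval (L1 @ L2) = plin_eval L1 + plin_eval L2"
  by (simp_all add: plin_eval_def)

lemma plin_coeff_Nil [simp]: "plin_coeff [] m = 0"
  and plin_coeff_Cons [simp]: "plin_coeff ((c, lam) # L) m = (if mset lam = m then c else 0) + plin_coeff L m"
  and plin_coeff_append [simp]: "plin_coeff (L1 @ L2) m = plin_coeff L1 m + plin_coeff L2 m"
  by (simp_all add: plin_coeff_def)

lemma plin_eval_concat: "plin_eval (concat Ls) = (\<Sum>L\<leftarrow>Ls. plin_eval L)"
  by (induction Ls) auto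

lemma plin_coeff_concat: "plin_coeff (concat Ls) m = (\<Sum>L\<leftarrow>Ls. plin_coeff L m)"
  by (induction Ls) auto

lemma plin_eval_scale: "plin_eval (map (\<lambda>(a, lam). (s * a, lam)) L) = mconst s * plin_eval L"
  by (induction L) (auto simp: mconst_mult algebra_simps)

lemma Abs_mps_sf_lin: "Abs_mps (sf_lin L) = plin_eval L"
proof (induction L)
  case Nil
  show ?case by (rule mps_eqI) (simp add: sf_lin_def)
next
  case (Cons x L)
  obtain c lam where x: "x = (c, lam)" by (cases x)
  have "Abs_mps (sf_lin (x # L)) = mconst c * Abs_mps (p_part lam) + Abs_mps (sf_lin L)"
    by (rule mps_eqI) (simp add: sf_lin_def x)
  then show ?case using Cons by (simp add: x Abs_mps_p_part)
qed

abbreviation plin_msets :: "(rat \<times> nat list) list \<Rightarrow> nat multiset set" where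
  "plin_msets L \<equiv> (\<lambda>(c, lam). mset lam) ` set L"

lemma plin_coeff_notin: "m \<notin> plin_msets L \<Longrightarrow> plin_coeff L m = 0"
  by (induction L) auto

lemma plin_eval_eq_sum_plin_coeff:
  assumes "finite S" "plin_msets L \<subseteq> S"
  shows "plin_eval L = (\<Sum>m\<in>S. mconst (plin_coeff L m) * mpsum_mset m)"
  using assms(2)
proof (induction L)
  case Nil
  then show ?case by (simp add: mconst_zero)
next
  case (Cons x L)
  obtain c lam where x: "x = (c, lam)" by (cases x)
  have "(\<Sum>m\<in>S. mconst (if mset lam = m then c else 0) * mpsum_mset m)
      = (\<Sum>m\<in>S. if mset lam = m then mconst c * mpsum_mset m else 0)"
    by (intro sum.cong) (auto simp: mconst_zero)
  also have "\<dots> = mconst c * (\<Prod>r\<leftarrow>lam. mpsum r)"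
    using Cons.prems assms(1) by (simp add: x mpsum_mset_mset)
  finally have "mconst c * (\<Prod>r\<leftarrow>lam. mpsum r)
      = (\<Sum>m\<in>S. mconst (if mset lam = m then c else 0) * mpsum_mset m)" ..
  then show ?case
    using Cons by (simp add: x mconst_add distrib_right sum.distrib)
qed

text \<open>The p-partition representation of an element is unique; this makes the involution
  omega of the definitions independent of the representation chosen by the choice operator.\<close>
lemma plin_coeff_eq_if_plin_eval_eq:
  assumes "valid_plin L1" "valid_plin L2" "plin_eval L1 = plin_eval L2"
  shows "plin_coeff L1 m = plin_coeff L2 m"
proof -
  let ?S = "plin_msets L1 \<union> plin_msets L2"
  have pos: "\<forall>m\<in>?S. 0 \<notin># m" using assms(1,2) by (fastforce simp: valid_plin_def)
  have "(\<Sum>m\<in>?S. mconst (plin_coeff L1 m - plin_coeff L2 m) * mpsum_mset m) = 0"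
    unfolding mconst_diff left_diff_distrib sum_subtractf
    using assms(3) plin_eval_eq_sum_plin_coeff[of ?S L1] plin_eval_eq_sum_plin_coeff[of ?S L2] by simp
  then have "\<forall>m\<in>?S. plin_coeff L1 m - plin_coeff L2 m = 0"
    by (rule mpsum_mset_linear_independent[OF _ pos, rotated]) simp
  then show ?thesis by (cases "m \<in> ?S") (auto simp: plin_coeff_notin)
qed

lemma plin_eval_eqI:
  assumes "\<And>m. plin_coeff L1 m = plin_coeff L2 m"
  shows "plin_eval L1 = plin_eval L2"
  using plin_eval_eq_sum_plin_coeff[of "plin_msets L1 \<union> plin_msets L2" L1]
    plin_eval_eq_sum_plin_coeff[of "plin_msets L1 \<union> plin_msets L2" L2]
  by (simp add: assms)

lemma plin_coeff_scale:
  "plin_coeff (map (\<lambda>(c, lam). (f (mset lam) * c, lam)) L) m = f m * plin_coeff L m"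
  by (induction L) (auto simp: distrib_left)

definition omega_sign_mset :: "nat multiset \<Rightarrow> rat" where
  "omega_sign_mset m = (\<Prod>r\<in>#m. (-1) ^ (r - 1))"

lemma omega_sign_eq: "omega_sign lam = omega_sign_mset (mset lam)"
  by (simp add: omega_sign_def omega_sign_mset_def prod_mset_prod_list[symmetric] mset_map)

lemma Abs_mps_sf_omega:
  assumes "valid_plin L"
  shows "Abs_mps (sf_omega (sf_lin L)) = plin_eval (map (\<lambda>(c, lam). (omega_sign lam * c, lam)) L)"
proof -
  define L' where "L' = (SOME L'. valid_plin L' \<and> sf_lin L = sf_lin L')"
  have "valid_plin L' \<and> sf_lin L = sf_lin L'"
    unfolding L'_def by (rule someI[of _ L]) (use assms in simp)
  then have "plin_coeff L m = plin_coeff L' m" for m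
    using assms by (metis plin_coeff_eq_if_plin_eval_eq Abs_mps_sf_lin)
  then show ?thesis
    unfolding sf_omega_def L'_def[symmetric] Abs_mps_sf_lin omega_sign_eq
    by (intro plin_eval_eqI) (simp add: plin_coeff_scale)
qed

lemma Abs_mps_near_chromatic_sf:
  assumes "valid_plin L" "chromatic_sf V E = sf_lin L"
  shows "Abs_mps (near_chromatic_sf V E)
       = plin_eval (map (\<lambda>(c, lam). ((1 + omega_sign lam) / 2 * c, lam)) L)"
proof -
  have "mconst (1/2) * (plin_eval L + plin_eval (map (\<lambda>(c, lam). (omega_sign lam * c, lam)) L))
      = plin_eval (map (\<lambda>(c, lam). ((1 + omega_sign lam) / 2 * c, lam)) L)"
  proof (induction L)
    case (Cons x L)
    obtain c lam where x: "x = (c, lam)" by (cases x)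
    have "mconst (1/2) * (mconst c * P + A + (mconst (omega_sign lam * c) * P + B))
        = mconst ((1 + omega_sign lam) / 2 * c) * P + mconst (1/2) * (A + B)" for P A B
      by (rule mps_eqI) (simp, simp add: field_simps)
    with Cons show ?case by (simp add: x)
  qed simp
  then show ?thesis
    by (simp add: near_chromatic_sf_def Abs_mps_sf_smult Abs_mps_sf_add assms Abs_mps_sf_omega Abs_mps_sf_lin)
qed

section \<open>The triangle and the stars\<close>

lemma cone_mpsum:
  assumes "0 < j" "0 < k"
  shows "cone j (mpsum k) = mpsum k * mpsum j - mpsum (j + k)"
  using cone_mpsum_mult[OF assms, of 1] cone_one[OF assms(1)] cone_one[of "j + k"] assms
  by (simp add: algebra_simps)

lemma chromatic_sf_triangle:
  "Abs_mps (chromatic_sf triangle_V triangle_E) = mpsum 1 ^ 3 - 3 * (mpsum 2 * mpsum 1) + 2 * mpsum 3"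
proof -
  have V: "triangle_V = insert 0 (insert 1 (insert 2 {}))" by (auto simp: triangle_V_def)
  have "Abs_mps (chromatic_sf triangle_V triangle_E) = cone 1 (cone 1 (cone 1 1))"
    unfolding V by (simp add: chromatic_sf_insert_cone chromatic_sf_empty triangle_E_def)
  also have "cone 1 (cone 1 (cone 1 1)) = cone 1 (mpsum 1 * mpsum 1) - cone 1 (mpsum 2)"
    by (simp add: cone_one cone_mpsum cone_diff numeral_2_eq_2)
  also have "cone 1 (mpsum 1 * mpsum 1) = mpsum 1 * cone 1 (mpsum 1) - cone 2 (mpsum 1)"
    using cone_mpsum_mult[of 1 1 "mpsum 1"] by (simp add: numeral_2_eq_2)
  finally show ?thesis by (simp add: cone_mpsum algebra_simps power3_eq_cube numeral_2_eq_2 numeral_3_eq_3)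
qed

definition triangle_plin :: "(rat \<times> nat list) list" where
  "triangle_plin = [(1, [1, 1, 1]), (-3, [2, 1]), (2, [3])]"

lemma chromatic_sf_triangle_plin: "chromatic_sf triangle_V triangle_E = sf_lin triangle_plin"
proof -
  have "Abs_mps (sf_lin triangle_plin) = Abs_mps (chromatic_sf triangle_V triangle_E)"
    by (simp add: Abs_mps_sf_lin chromatic_sf_triangle triangle_plin_def mconst_one mconst_uminus
        mconst_of_nat[of 3, simplified] mconst_of_nat[of 2, simplified] algebra_simps power3_eq_cube)
  then show ?thesis by (simp add: Abs_mps_eq_iff)
qed

theorem near_chromatic_sf_triangle:
  "near_chromatic_sf triangle_V triangle_E = sf_add (sf_pow (psum 1) 3) (sf_smult 2 (psum 3))"
proof -
  have "valid_plin triangle_plin" by (simp add: valid_plin_def triangle_plin_def)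
  then have "Abs_mps (near_chromatic_sf triangle_V triangle_E)
      = plin_eval [(1, [1, 1, 1]), (0, [2, 1]), (2, [3])]"
    by (simp add: Abs_mps_near_chromatic_sf chromatic_sf_triangle_plin triangle_plin_def omega_sign_def)
  also have "\<dots> = Abs_mps (sf_add (sf_pow (psum 1) 3) (sf_smult 2 (psum 3)))"
    by (simp add: Abs_mps_sf_add Abs_mps_sf_pow Abs_mps_sf_smult mpsum_def[symmetric] mconst_one mconst_zero
        power3_eq_cube)
  finally show ?thesis by (simp add: Abs_mps_eq_iff)
qed

lemma chromatic_sf_star:
  assumes "1 \<le> n"
  shows "Abs_mps (chromatic_sf (star_V n) star_E) = cone 1 (mpsum 1 ^ (n - 1))"
proof -
  have "star_V n = insert 0 {1..<n}" using assms by (auto simp: star_V_def)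
  moreover have "Abs_mps (chromatic_sf {1..<n} star_E) = mpsum 1 ^ (n - 1)"
    by (simp add: chromatic_sf_edgeless star_E_def)
  ultimately show ?thesis by (simp add: chromatic_sf_insert_cone star_E_def)
qed

definition star_plin :: "nat \<Rightarrow> (rat \<times> nat list) list" where
  "star_plin n = map (\<lambda>r. ((-1) ^ r * of_nat ((n - 1) choose r), (r + 1) # replicate (n - 1 - r) 1)) [0..<n]"

lemma chromatic_sf_star_plin:
  assumes "1 \<le> n"
  shows "chromatic_sf (star_V n) star_E = sf_lin (star_plin n)"
proof -
  have "Abs_mps (sf_lin (star_plin n))
      = (\<Sum>r\<leftarrow>[0..<n]. mconst ((-1) ^ r * of_nat ((n - 1) choose r)) * (mpsum (1 + r) * mpsum 1 ^ (n - 1 - r)))"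
    by (simp add: Abs_mps_sf_lin plin_eval_def star_plin_def o_def prod_list_replicate)
  also have "\<dots> = (\<Sum>r\<in>{0..<n}. (-1) ^ r * of_nat ((n - 1) choose r) * (mpsum (1 + r) * mpsum 1 ^ (n - 1 - r)))"
    by (simp add: sum_set_upt_conv_sum_list_nat[symmetric] mconst_mult mconst_power mconst_uminus mconst_one
        mconst_of_nat)
  also have "\<dots> = (\<Sum>r\<le>n - 1. (-1) ^ r * of_nat ((n - 1) choose r) * (mpsum (1 + r) * mpsum 1 ^ (n - 1 - r)))"
    using assms by (intro sum.cong) auto
  also have "\<dots> = Abs_mps (chromatic_sf (star_V n) star_E)"
    unfolding chromatic_sf_star[OF assms] cone_mpsum_1_power[OF zero_less_one] ..
  finally show ?thesis by (simp add: Abs_mps_eq_iff)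
qed

definition star_near_plin :: "nat \<Rightarrow> (rat \<times> nat list) list" where
  "star_near_plin n = map (\<lambda>r. (if even r then of_nat ((n - 1) choose r) else 0,
                                  (r + 1) # replicate (n - 1 - r) 1)) [0..<n]"

lemma near_chromatic_sf_star_plin:
  assumes "1 \<le> n"
  shows "Abs_mps (near_chromatic_sf (star_V n) star_E) = plin_eval (star_near_plin n)"
proof -
  have omega: "omega_sign ((r + 1) # replicate k 1) = (-1) ^ r" for r k
    by (simp add: omega_sign_def)
  have half: "(1 + (-1) ^ r) / 2 * ((-1) ^ r * c) = (if even r then c else 0 :: rat)" for r c
    by (cases "even r") auto
  have "map (\<lambda>(c, lam). ((1 + omega_sign lam) / 2 * c, lam)) (star_plin n) = star_near_plin n"
    unfolding star_plin_def star_near_plin_def map_map o_def prod.case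
    by (intro map_cong refl) (simp only: omega half)
  moreover have "valid_plin (star_plin n)" by (auto simp: valid_plin_def star_plin_def)
  ultimately show ?thesis
    by (simp add: Abs_mps_near_chromatic_sf chromatic_sf_star_plin[OF assms])
qed

theorem near_chromatic_sf_star:
  assumes "1 \<le> n"
  shows "near_chromatic_sf (star_V n) star_E
       = sf_sum (\<lambda>r. sf_smult (of_nat ((n - 1) choose r)) (sf_mult (psum (r + 1)) (sf_pow (psum 1) (n - r - 1))))
           {r. r \<le> n - 1 \<and> even r}"
proof -
  let ?term = "\<lambda>r. mpsum (r + 1) * mpsum 1 ^ (n - 1 - r)"
  have "Abs_mps (near_chromatic_sf (star_V n) star_E)
      = (\<Sum>r\<in>{0..<n}. mconst (if even r then of_nat ((n - 1) choose r) else 0) * ?term r)"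
    by (simp add: near_chromatic_sf_star_plin[OF assms] plin_eval_def star_near_plin_def o_def
        prod_list_replicate sum_set_upt_conv_sum_list_nat[symmetric])
  also have "\<dots> = (\<Sum>r\<in>{r. r \<le> n - 1 \<and> even r}. mconst (of_nat ((n - 1) choose r)) * ?term r)"
    using assms by (intro sum.mono_neutral_cong_right) (auto simp: mconst_zero)
  also have "\<dots> = Abs_mps (sf_sum (\<lambda>r. sf_smult (of_nat ((n - 1) choose r))
                        (sf_mult (psum (r + 1)) (sf_pow (psum 1) (n - r - 1)))) {r. r \<le> n - 1 \<and> even r})"
    by (simp add: Abs_mps_sf_sum Abs_mps_sf_smult Abs_mps_sf_mult Abs_mps_sf_pow mpsum_def[symmetric])
  finally show ?thesis by (simp add: Abs_mps_eq_iff)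
qed

section \<open>Leading terms and algebraic independence\<close>

definition plin_mult :: "(rat \<times> nat list) list \<Rightarrow> (rat \<times> nat list) list \<Rightarrow> (rat \<times> nat list) list" where
  "plin_mult L1 L2 = [(a * b, lam1 @ lam2). (a, lam1) \<leftarrow> L1, (b, lam2) \<leftarrow> L2]"

lemma plin_eval_plin_mult: "plin_eval (plin_mult L1 L2) = plin_eval L1 * plin_eval L2"
proof (induction L1)
  case (Cons x L1)
  obtain a lam where x: "x = (a, lam)" by (cases x)
  have "plin_eval (map (\<lambda>(b, lam'). (a * b, lam @ lam')) L2) = mconst a * (\<Prod>r\<leftarrow>lam. mpsum r) * plin_eval L2"
    by (induction L2) (auto simp: mconst_mult algebra_simps)
  with Cons show ?case by (simp add: plin_mult_def x distrib_right)
qed (simp add: plin_mult_def)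

lemma valid_plin_mult: "valid_plin L1 \<Longrightarrow> valid_plin L2 \<Longrightarrow> valid_plin (plin_mult L1 L2)"
  by (fastforce simp: valid_plin_def plin_mult_def)

lemma add_mset_eq_top_iff:
  fixes m1 m2 m1' m2' :: "nat multiset"
  assumes "m1 \<le> m1'" "m2 \<le> m2'"
  shows "m1 + m2 = m1' + m2' \<longleftrightarrow> m1 = m1' \<and> m2 = m2'"
  using add_less_le_mono[of m1 m1' m2 m2'] add_le_less_mono[of m1 m1' m2 m2'] assms
  by (metis order.not_eq_order_implies_strict order_less_irrefl)

lemma plin_coeff_plin_mult_top:
  assumes "\<forall>(a, lam)\<in>set L1. mset lam \<le> m1" "\<forall>(b, lam)\<in>set L2. mset lam \<le> m2"
  shows "plin_coeff (plin_mult L1 L2) (m1 + m2) = plin_coeff L1 m1 * plin_coeff L2 m2"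
  using assms(1)
proof (induction L1)
  case (Cons x L1)
  obtain a lam where x: "x = (a, lam)" by (cases x)
  have "mset lam \<le> m1" using Cons.prems x by auto
  then have "plin_coeff (map (\<lambda>(b, lam'). (a * b, lam @ lam')) L2) (m1 + m2)
      = (if mset lam = m1 then a * plin_coeff L2 m2 else 0)"
    using assms(2) by (induction L2) (auto simp: add_mset_eq_top_iff distrib_left)
  with Cons show ?case by (simp add: plin_mult_def x distrib_right)
qed (simp add: plin_mult_def)

definition has_leading_term :: "mps \<Rightarrow> nat multiset \<Rightarrow> rat \<Rightarrow> bool" where
  "has_leading_term f m c \<longleftrightarrow> (\<exists>L. valid_plin L \<and> f = plin_eval L
      \<and> (\<forall>(a, lam)\<in>set L. mset lam \<le> m) \<and> plin_coeff L m = c)"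

lemma has_leading_term_one: "has_leading_term 1 {#} 1"
  unfolding has_leading_term_def
  by (intro exI[of _ "[(1, [])]"]) (simp add: valid_plin_def mconst_one)

lemma has_leading_term_mult:
  assumes "has_leading_term f m1 c1" "has_leading_term g m2 c2"
  shows "has_leading_term (f * g) (m1 + m2) (c1 * c2)"
proof -
  obtain L1 L2 where L1: "valid_plin L1" "f = plin_eval L1" "\<forall>(a, lam)\<in>set L1. mset lam \<le> m1" "plin_coeff L1 m1 = c1"
    and L2: "valid_plin L2" "g = plin_eval L2" "\<forall>(a, lam)\<in>set L2. mset lam \<le> m2" "plin_coeff L2 m2 = c2"
    using assms unfolding has_leading_term_def by blast
  have "\<forall>(a, lam)\<in>set (plin_mult L1 L2). mset lam \<le> m1 + m2"
    using L1(3) L2(3) by (fastforce simp: plin_mult_def intro: add_mono)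
  with L1 L2 show ?thesis
    unfolding has_leading_term_def
    by (intro exI[of _ "plin_mult L1 L2"])
       (simp add: valid_plin_mult plin_eval_plin_mult plin_coeff_plin_mult_top)
qed

lemma has_leading_term_power:
  "has_leading_term f m c \<Longrightarrow> has_leading_term (f ^ k) (repeat_mset k m) (c ^ k)"
  by (induction k) (simp_all add: has_leading_term_one has_leading_term_mult)

lemma has_leading_term_near_chromatic_sf_star:
  assumes "odd n"
  shows "has_leading_term (Abs_mps (near_chromatic_sf (star_V n) star_E)) {#n#} 1"
proof -
  have n: "1 \<le> n" using assms by (cases n) auto
  have part_eq: "mset ((r + 1) # replicate (n - 1 - r) 1) = {#n#} \<longleftrightarrow> r = n - 1" if "r < n" for r
    using that by (auto simp: replicate_mset_eq_empty_iff dest: arg_cong[where f = size])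
  have "valid_plin (star_near_plin n)" by (auto simp: valid_plin_def star_near_plin_def)
  moreover have "\<forall>(a, lam)\<in>set (star_near_plin n). mset lam \<le> {#n#}"
    using assms by (auto simp: star_near_plin_def)
  moreover have "plin_coeff (star_near_plin n) {#n#} = (\<Sum>r\<leftarrow>[0..<n]. if r = n - 1 then 1 else 0)"
    unfolding star_near_plin_def plin_coeff_def map_map o_def prod.case
    using assms part_eq by (intro arg_cong[where f = sum_list] map_cong) auto
  moreover have "(\<Sum>r\<leftarrow>[0..<n]. if r = n - 1 then 1 else 0) = (1 :: rat)"
    using n by (simp add: sum_set_upt_conv_sum_list_nat[symmetric])
  ultimately show ?thesis
    unfolding has_leading_term_def near_chromatic_sf_star_plin[OF n] by auto
qed

text \<open>Elements whose leading terms (with coefficient 1) are pairwise distinct are linearly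
  independent: in a vanishing combination, the largest leading term with nonzero coefficient
  cannot be cancelled.\<close>
lemma leading_terms_linear_independent:
  assumes "finite M" "inj_on lt M" "\<forall>e\<in>M. has_leading_term (f e) (lt e) 1"
    and zero: "(\<Sum>e\<in>M. mconst (c e) * f e) = 0"
  shows "\<forall>e\<in>M. c e = 0"
proof (rule ccontr)
  assume "\<not> (\<forall>e\<in>M. c e = 0)"
  then have M': "finite {e \<in> M. c e \<noteq> 0}" "{e \<in> M. c e \<noteq> 0} \<noteq> {}" using assms(1) by auto
  then obtain e0 where e0: "e0 \<in> M" "c e0 \<noteq> 0" "lt e0 = Max (lt ` {e \<in> M. c e \<noteq> 0})"
    using Max_in[of "lt ` {e \<in> M. c e \<noteq> 0}"] by fastforce
  have smaller: "lt e < lt e0" if "e \<in> M" "c e \<noteq> 0" "e \<noteq> e0" for e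
    using that e0 M'(1) assms(2) by (metis (mono_tags, lifting) Max_ge finite_imageI image_eqI
        inj_on_contraD mem_Collect_eq order_le_neq_trans)
  obtain Lf where Lf: "\<forall>e\<in>M. valid_plin (Lf e) \<and> f e = plin_eval (Lf e)
      \<and> (\<forall>(a, lam)\<in>set (Lf e). mset lam \<le> lt e) \<and> plin_coeff (Lf e) (lt e) = 1"
    using assms(3) unfolding has_leading_term_def by metis
  obtain es where es: "set es = M" "distinct es" using finite_distinct_list[OF assms(1)] by blast
  define L where "L = concat (map (\<lambda>e. map (\<lambda>(a, lam). (c e * a, lam)) (Lf e)) es)"
  have "plin_eval L = (\<Sum>e\<leftarrow>es. mconst (c e) * plin_eval (Lf e))"
    by (simp add: L_def plin_eval_concat plin_eval_scale o_def)
  also have "\<dots> = (\<Sum>e\<in>M. mconst (c e) * f e)"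
    using Lf es by (simp add: sum_list_distinct_conv_sum_set)
  finally have "plin_eval L = (\<Sum>e\<in>M. mconst (c e) * f e)" .
  then have "plin_coeff L (lt e0) = plin_coeff [] (lt e0)"
    using Lf zero es by (intro plin_coeff_eq_if_plin_eval_eq) (fastforce simp: valid_plin_def L_def)+
  moreover have "plin_coeff L (lt e0) = (\<Sum>e\<in>M. c e * plin_coeff (Lf e) (lt e0))"
    using plin_coeff_scale[of "\<lambda>_. c e" for e] es
    by (simp add: L_def plin_coeff_concat o_def sum_list_distinct_conv_sum_set)
  moreover have "(\<Sum>e\<in>M. c e * plin_coeff (Lf e) (lt e0)) = c e0"
  proof -
    have "plin_coeff (Lf e) (lt e0) = 0" if "e \<in> M" "c e \<noteq> 0" "e \<noteq> e0" for e
      using Lf smaller[OF that] that(1) by (fastforce intro!: plin_coeff_notin)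
    then have "(\<Sum>e\<in>M. c e * plin_coeff (Lf e) (lt e0)) = (\<Sum>e\<in>{e0}. c e * plin_coeff (Lf e) (lt e0))"
      using e0 assms(1) by (intro sum.mono_neutral_right) auto
    then show ?thesis using Lf e0(1) by simp
  qed
  ultimately show False using e0 by simp
qed

definition monomial_lead :: "nat list \<Rightarrow> nat list \<Rightarrow> nat multiset" where
  "monomial_lead ns e = (\<Sum>(n, k)\<leftarrow>zip ns e. replicate_mset k n)"

lemma set_mset_monomial_lead: "set_mset (monomial_lead ns e) \<subseteq> set ns"
  by (auto simp: monomial_lead_def dest!: set_zip_leftD split: if_splits)

lemma monomial_lead_inj:
  assumes "distinct ns" "length e = length ns" "length e' = length ns"
    and "monomial_lead ns e = monomial_lead ns e'"
  shows "e = e'"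
  using assms
proof (induction ns arbitrary: e e')
  case (Cons n ns)
  obtain k es k' es' where e: "e = k # es" "e' = k' # es'"
    using Cons.prems(2,3) by (metis length_Suc_conv)
  have eq: "replicate_mset k n + monomial_lead ns es = replicate_mset k' n + monomial_lead ns es'"
    using Cons.prems(4) by (simp add: e monomial_lead_def)
  have "count (monomial_lead ns x) n = 0" for x
    using set_mset_monomial_lead[of ns x] Cons.prems(1) by (auto simp: count_eq_zero_iff)
  then have "k = k'" using arg_cong[OF eq, of "\<lambda>M. count M n"] by simp
  with eq Cons show ?case by (simp add: e)
qed simp

lemma has_leading_term_star_monomial:
  assumes "\<forall>n\<in>set ns. odd n"
  shows "has_leading_term (\<Prod>(n, k)\<leftarrow>zip ns e. Abs_mps (near_chromatic_sf (star_V n) star_E) ^ k)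
           (monomial_lead ns e) 1"
  using assms
proof (induction ns arbitrary: e)
  case (Cons n ns)
  then show ?case
    using has_leading_term_mult[OF has_leading_term_power[OF has_leading_term_near_chromatic_sf_star]]
    by (cases e) (auto simp: monomial_lead_def has_leading_term_one)
qed (simp add: monomial_lead_def has_leading_term_one)

theorem alg_indep_near_chromatic_sf_odd_stars:
  "alg_indep_Q {near_chromatic_sf (star_V n) star_E | n. odd n}"
  unfolding alg_indep_Q_def
proof (intro allI impI)
  fix ys M and c :: "nat list \<Rightarrow> rat"
  assume "distinct ys \<and> set ys \<subseteq> {near_chromatic_sf (star_V n) star_E | n. odd n} \<and> finite M \<and>
      (\<forall>e\<in>M. length e = length ys) \<and> sf_sum (\<lambda>e. sf_smult (c e) (sf_monomial ys e)) M = sf_zero"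
  then have ys: "distinct ys" "set ys \<subseteq> {near_chromatic_sf (star_V n) star_E | n. odd n}"
    and M: "finite M" "\<forall>e\<in>M. length e = length ys"
    and zero: "sf_sum (\<lambda>e. sf_smult (c e) (sf_monomial ys e)) M = sf_zero" by auto
  let ?Y = "\<lambda>n. near_chromatic_sf (star_V n) star_E"
  have "\<exists>k. y = ?Y (2 * k + 1)" if "y \<in> set ys" for y
  proof -
    obtain n where "y = ?Y n" "odd n" using ys(2) \<open>y \<in> set ys\<close> by blast
    then show ?thesis by (intro exI[of _ "n div 2"]) simp
  qed
  then obtain ks where "ys = map (\<lambda>k. ?Y (2 * k + 1)) ks"
    using ex_map_conv[of ys "\<lambda>k. ?Y (2 * k + 1)"] by blast
  then obtain ns where ns: "ys = map ?Y ns" "\<forall>n\<in>set ns. odd n"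
    by (intro that[of "map (\<lambda>k. 2 * k + 1) ks"]) auto
  have combination: "(\<Sum>e\<in>M. mconst (c e) * (\<Prod>(n, k)\<leftarrow>zip ns e. Abs_mps (?Y n) ^ k)) = 0"
    using arg_cong[OF zero, of Abs_mps]
    by (simp add: Abs_mps_sf_sum Abs_mps_sf_smult Abs_mps_sf_monomial ns(1) zip_map1 o_def
        case_prod_unfold zero_mps.abs_eq)
  have inj: "inj_on (monomial_lead ns) M"
    using M(2) ys(1) monomial_lead_inj[of ns] by (auto simp: ns(1) distinct_map inj_on_def)
  show "\<forall>e\<in>M. c e = 0"
    using has_leading_term_star_monomial[OF ns(2)]
    by (intro leading_terms_linear_independent[OF M(1) inj _ combination]) blast
qed

theorem mainTheorem2:
  shows "near_chromatic_sf triangle_V triangle_E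
           = sf_add (sf_pow (psum 1) 3) (sf_smult 2 (psum 3))
       \<and> (\<forall>n::nat. n \<ge> 1 \<longrightarrow>
           near_chromatic_sf (star_V n) star_E
             = sf_sum (\<lambda>r. sf_smult (of_nat ((n - 1) choose r))
                              (sf_mult (psum (r + 1)) (sf_pow (psum 1) (n - r - 1))))
                      {r. r \<le> n - 1 \<and> even r})
       \<and> alg_indep_Q {near_chromatic_sf (star_V n) star_E | n. odd n}"
  using near_chromatic_sf_triangle near_chromatic_sf_star alg_indep_near_chromatic_sf_odd_stars
  by blast

end
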